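(* Let $b>a\ge0$ and let $w$ be a palindrome (a word equal to its reverse). Then $$[S(w)]_{21}=[M(w)]_{22}-1\qquad\text{and}\qquad [S(w)]_{22}=[M(w)]_{12}+[S(w)]_{21}.$$ Furthermore, for every $k\in\mathbb{Z}_+$, $$\Big[S(10w)\,M\big(w(10w)^k\big)-S(01w)\,M\big(w(01w)^k\big)\Big]_{22}=0 .$$
   Context: Words are finite strings over $\{0,1\}$, $\epsilon$ the empty word, $w_k$ the $k$-th letter, $w_{1:k}=w_1\cdots w_k$, $|w|$ the length, $w^k$ the $k$-fold repetition ($w^0=\epsilon$), $\mathbb{Z}_+=\{0,1,2,\dots\}$. Define $F=\begin{pmatrix}1&1\\ a&1+a\end{pmatrix}$, $G=\begin{pmatrix}1&1\\ b&1+b\end{pmatrix}$, and for a word $w$, $M(w):=M(w_{|w|})\cdots M(w_1)$ with $M(\epsilon)=I$, $M(0)=F$, $M(1)=G$. The prefix sum is $S(w):=\sum_{k=1}^{|w|}M(w_{1:k})$, with $S(\epsilon)=0$ (the zero matrix). $[A]_{ij}$ denotes the $(i,j)$ entry. *)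

theory Defs
  imports "HOL-Analysis.Analysis"
begin

(* Words over {0,1} are lists of bool: False = letter 0, True = letter 1. *)

definition Fm :: "real \<Rightarrow> real^2^2" where
  "Fm a = vector [vector [1, 1], vector [a, 1 + a]]"

definition letter_mat :: "real \<Rightarrow> real \<Rightarrow> bool \<Rightarrow> real^2^2" where
  "letter_mat a b c = (if c then Fm b else Fm a)"

fun Mw :: "real \<Rightarrow> real \<Rightarrow> bool list \<Rightarrow> real^2^2" where
  "Mw a b [] = mat 1"
| "Mw a b (c # w) = Mw a b w ** letter_mat a b c"

definition Sw :: "real \<Rightarrow> real \<Rightarrow> bool list \<Rightarrow> real^2^2" where
  "Sw a b w = (\<Sum>k = 1..length w. Mw a b (take k w))"

definition wpow :: "bool list \<Rightarrow> nat \<Rightarrow> bool list" where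
  "wpow w k = concat (replicate k w)"

end

theory Submission
  imports Defs
begin

(* Every letter matrix L has first row (1,1), so (1,1) L = (0,1) L + (1,1); hence the second
   row of S(u) is the row sum of M(u) minus (1,1), and the (2,2) entry of S(u) X is expressed
   through M(u) X and X alone.  With P = [[0,1],[1,1]] one has P L = L^T P, so
   P M(rev u) = M(u)^T P: for a palindrome this relates the entries of M(w), and in general it
   shows that the second column sum of M(u) is invariant under reversal of u.  Since
   M(u) M(w (uw)^k) = M(w (uw)^(k+1)) and w (01w)^k is the reversal of w (10w)^k, the two
   terms of the last claim are then equal. *)

lemma matrix_mult_2_nth: "((A::real^2^2) ** B) $ i $ j = A$i$1 * B$1$j + A$i$2 * B$2$j"
  by (simp add: matrix_matrix_mult_def sum_2)

lemma matrix_2_eq_iff: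
  "(A::real^2^2) = B \<longleftrightarrow> A$1$1 = B$1$1 \<and> A$1$2 = B$1$2 \<and> A$2$1 = B$2$1 \<and> A$2$2 = B$2$2"
  by (auto simp: vec_eq_iff forall_2)

lemma Fm_nth [simp]: "Fm t $1$1 = 1" "Fm t $1$2 = 1" "Fm t $2$1 = t" "Fm t $2$2 = 1 + t"
  by (simp_all add: Fm_def)

lemma Mw_append: "Mw a b (x @ y) = Mw a b y ** Mw a b x"
  by (induction x) (auto simp: matrix_mul_assoc)

lemma Mw_snoc: "Mw a b (x @ [c]) = letter_mat a b c ** Mw a b x"
  by (simp add: Mw_append matrix_mul_rid)

lemma Sw_snoc: "Sw a b (x @ [c]) = Sw a b x + Mw a b (x @ [c])"
proof -
  have "(\<Sum>k = 1..length x. Mw a b (take k (x @ [c]))) = Sw a b x"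
    unfolding Sw_def by (rule sum.cong) auto
  then show ?thesis
    unfolding Sw_def by simp
qed

lemma Sw_row2_nth: "Sw a b u $ 2 $ j = Mw a b u $ 1 $ j + Mw a b u $ 2 $ j - 1"
proof (induction u rule: rev_induct)
  case Nil
  show ?case
    using exhaust_2[of j] by (auto simp: Sw_def mat_def)
next
  case (snoc c x)
  then show ?case
    unfolding Sw_snoc Mw_snoc
    by (simp add: matrix_mult_2_nth letter_mat_def algebra_simps)
qed

lemma Sw_mult_nth_2_2:
  "(Sw a b u ** X) $ 2 $ 2 = (Mw a b u ** X) $ 1 $ 2 + (Mw a b u ** X) $ 2 $ 2 - X $ 1 $ 2 - X $ 2 $ 2"
  by (simp add: matrix_mult_2_nth Sw_row2_nth algebra_simps)

definition Pm :: "real^2^2" where "Pm = vector [vector [0, 1], vector [1, 1]]"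

lemma Pm_nth [simp]: "Pm $1$1 = 0" "Pm $1$2 = 1" "Pm $2$1 = 1" "Pm $2$2 = 1"
  by (simp_all add: Pm_def)

lemma Pm_letter_mat: "Pm ** letter_mat a b c = transpose (letter_mat a b c) ** Pm"
  by (simp add: matrix_2_eq_iff matrix_mult_2_nth letter_mat_def transpose_def)

lemma Pm_Mw_rev: "Pm ** Mw a b (rev x) = transpose (Mw a b x) ** Pm"
proof (induction x)
  case Nil
  show ?case by (simp add: matrix_mul_rid matrix_mul_lid transpose_mat)
next
  case (Cons c x)
  have "Pm ** Mw a b (rev (c # x)) = (Pm ** letter_mat a b c) ** Mw a b (rev x)"
    by (simp add: Mw_snoc matrix_mul_assoc)
  also have "\<dots> = transpose (letter_mat a b c) ** (Pm ** Mw a b (rev x))"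
    by (simp add: Pm_letter_mat matrix_mul_assoc)
  also have "\<dots> = transpose (Mw a b (c # x)) ** Pm"
    by (simp add: Cons matrix_transpose_mul matrix_mul_assoc)
  finally show ?case .
qed

lemma Mw_rev_col2_sum:
  "Mw a b (rev x) $1$2 + Mw a b (rev x) $2$2 = Mw a b x $1$2 + Mw a b x $2$2"
  using arg_cong[OF Pm_Mw_rev[of a b x], of "\<lambda>A. A $2$2"]
  by (simp add: matrix_mult_2_nth transpose_def)

lemma Mw_palindrome_nth_2_2:
  assumes "rev w = w"
  shows "Mw a b w $2$2 = Mw a b w $1$1 + Mw a b w $2$1"
  using arg_cong[OF Pm_Mw_rev[of a b w], of "\<lambda>A. A $1$2"] assms
  by (simp add: matrix_mult_2_nth transpose_def)

lemma wpow_commute: "u @ wpow u k = wpow u k @ u"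
  by (induction k) (simp_all add: wpow_def)

lemma wpow_Suc: "wpow u (Suc k) = wpow u k @ u"
  by (simp add: wpow_def wpow_commute[unfolded wpow_def])

lemma rev_wpow: "rev (wpow u k) = wpow (rev u) k"
  by (induction k) (simp_all add: wpow_Suc wpow_commute, simp add: wpow_def)

lemma wpow_conjugate: "w @ wpow (u @ w) k = wpow (w @ u) k @ w"
  by (induction k) (simp_all add: wpow_def)

lemma rev_conjugate_wpow: "rev (w @ wpow (u @ w) k) = rev w @ wpow (rev u @ rev w) k"
  by (simp add: wpow_conjugate rev_wpow)

theorem proposition5:
  fixes a b :: real and w :: "bool list"
  assumes "0 \<le> a" and "a < b" and "rev w = w"
  shows "Sw a b w $ 2 $ 1 = Mw a b w $ 2 $ 2 - 1
     \<and> Sw a b w $ 2 $ 2 = Mw a b w $ 1 $ 2 + Sw a b w $ 2 $ 1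
     \<and> (\<forall>k::nat.
          (Sw a b ([True, False] @ w) ** Mw a b (w @ wpow ([True, False] @ w) k)
           - Sw a b ([False, True] @ w) ** Mw a b (w @ wpow ([False, True] @ w) k)) $ 2 $ 2 = 0)"
proof (intro conjI allI)
  have pal: "Mw a b w $2$2 = Mw a b w $1$1 + Mw a b w $2$1"
    using Mw_palindrome_nth_2_2[OF assms(3)] .
  then show "Sw a b w $ 2 $ 1 = Mw a b w $ 2 $ 2 - 1"
    by (simp add: Sw_row2_nth)
  from pal show "Sw a b w $ 2 $ 2 = Mw a b w $ 1 $ 2 + Sw a b w $ 2 $ 1"
    by (simp add: Sw_row2_nth)
next
  fix k
  let ?u = "[True, False] @ w" and ?v = "[False, True] @ w"
  let ?q = "\<lambda>u j. Mw a b (w @ wpow u j) $1$2 + Mw a b (w @ wpow u j) $2$2"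
  have step: "Mw a b u ** Mw a b (w @ wpow u k) = Mw a b (w @ wpow u (Suc k))" for u
    by (simp add: wpow_Suc Mw_append matrix_mul_assoc)
  have "rev (w @ wpow ?u j) = w @ wpow ?v j" for j
    using rev_conjugate_wpow[of w "[True, False]" j] assms(3) by simp
  then have "?q ?v j = ?q ?u j" for j
    by (metis Mw_rev_col2_sum)
  from this[of k] this[of "Suc k"]
  show "(Sw a b ?u ** Mw a b (w @ wpow ?u k) - Sw a b ?v ** Mw a b (w @ wpow ?v k)) $ 2 $ 2 = 0"
    unfolding vector_minus_component Sw_mult_nth_2_2 step by linarith
qed

end
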